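(* Every sequential rule and every reverse sequential rule (as defined in the context) is a linear mapping from $\mathcal E^*$ to $2^{\mathcal A_k}$.
   Context: Let $\mathcal A=[m]$, $k\le m$, and for $i\le m$ let $\mathcal A_i$ be the set of $i$-element subsets of $\mathcal A$. The preference space is $\mathcal E=2^{\mathcal A}$; a profile is $P=(A_1,\dots,A_n)\in\mathcal E^n$, $n\ge1$, and $\mathcal E^*=\bigcup_{n\ge1}\mathcal E^n$. $\mathrm{Hist}(P)\in\mathbb Z_{\ge0}^{|\mathcal E|}$ counts the occurrences of each ballot in $P$. A mapping $f:\mathcal E^*\to\mathcal D$ ($\mathcal D$ finite) is linear if there exist $\vec h_1,\dots,\vec h_K\in\mathbb R^{|\mathcal E|}$ and $g:\{+,-,0\}^K\to\mathcal D$ with $f(P)=g(\mathrm{sign}(\mathrm{Hist}(P)\cdot\vec h_1),\dots,\mathrm{sign}(\mathrm{Hist}(P)\cdot\vec h_K))$ for all $P$. For a function $\mathbf s_i:2^{\mathcal A}\times\mathcal A_i\to\mathbb R$ and $M\in\mathcal A_i$ write $\mathbf s_i(P,M)=\sum_{j=1}^n\mathbf s_i(A_j,M)$. Sequential rule: given $\mathbf s_1,\dots,\mathbf s_k$ with $\mathbf s_i:2^{\mathcal A}\times\mathcal A_i\to\mathbb R$, set $\mathcal S_0=\{\emptyset\}$ and for $i=1,\dots,k$, $\mathcal S_i=\arg\max\{\mathbf s_i(P,M\cup\{a\}): M\in\mathcal S_{i-1}, a\in\mathcal A\setminus M\}$ (the set of all maximizing sets $M\cup\{a\}$); output $\mathcal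 S_k$. Reverse sequential rule: given $\mathbf s_1,\dots,\mathbf s_{m-k}$ with $\mathbf s_i:2^{\mathcal A}\times\mathcal A_{m-i}\to\mathbb R$, set $\mathcal S_0=\{\mathcal A\}$ and for $i=1,\dots,m-k$, $\mathcal S_i=\arg\max\{\mathbf s_i(P,M\setminus\{a\}): M\in\mathcal S_{i-1}, a\in M\}$; output $\mathcal S_{m-k}$. *)

theory Defs
  imports Complex_Main
begin

definition alts :: "nat \<Rightarrow> nat set" where
  "alts m = {1..m}"

definition profiles :: "nat \<Rightarrow> nat set list set" where
  "profiles m = {P. P \<noteq> [] \<and> set P \<subseteq> Pow (alts m)}"

definition hist :: "nat set list \<Rightarrow> nat set \<Rightarrow> nat" where
  "hist P B = count_list P B"

text \<open>Linear mapping: finitely many vectors h_1..h_K indexed by ballots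
(given as a list of functions on ballots) and a function g of the sign vector.\<close>
definition linear_mapping :: "nat \<Rightarrow> (nat set list \<Rightarrow> 'd) \<Rightarrow> bool" where
  "linear_mapping m f \<longleftrightarrow>
     (\<exists>(hs :: (nat set \<Rightarrow> real) list) (g :: real list \<Rightarrow> 'd).
        \<forall>P \<in> profiles m.
          f P = g (map (\<lambda>h. sgn (\<Sum>B \<in> Pow (alts m). real (hist P B) * h B)) hs))"

definition pscore :: "(nat set \<Rightarrow> nat set \<Rightarrow> real) \<Rightarrow> nat set list \<Rightarrow> nat set \<Rightarrow> real" where
  "pscore s P M = (\<Sum>j<length P. s (P ! j) M)"

definition argmax_sets :: "(nat set \<Rightarrow> real) \<Rightarrow> nat set set \<Rightarrow> nat set set" where
  "argmax_sets f C = {X \<in> C. \<forall>Y \<in> C. f Y \<le> f X}"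

text \<open>Sequential rule; s i is the score function used in round i (i = 1..k).\<close>
fun seq_sets :: "nat \<Rightarrow> (nat \<Rightarrow> nat set \<Rightarrow> nat set \<Rightarrow> real) \<Rightarrow> nat set list \<Rightarrow> nat \<Rightarrow> nat set set" where
  "seq_sets m s P 0 = {{}}"
| "seq_sets m s P (Suc i) =
     argmax_sets (pscore (s (Suc i)) P)
       {insert a M | M a. M \<in> seq_sets m s P i \<and> a \<in> alts m - M}"

definition sequential_rule :: "nat \<Rightarrow> nat \<Rightarrow> (nat \<Rightarrow> nat set \<Rightarrow> nat set \<Rightarrow> real) \<Rightarrow> nat set list \<Rightarrow> nat set set" where
  "sequential_rule m k s P = seq_sets m s P k"

text \<open>Reverse sequential rule; s i is used in round i (i = 1..m-k), scoring (m-i)-sets.\<close>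
fun rev_seq_sets :: "nat \<Rightarrow> (nat \<Rightarrow> nat set \<Rightarrow> nat set \<Rightarrow> real) \<Rightarrow> nat set list \<Rightarrow> nat \<Rightarrow> nat set set" where
  "rev_seq_sets m s P 0 = {alts m}"
| "rev_seq_sets m s P (Suc i) =
     argmax_sets (pscore (s (Suc i)) P)
       {M - {a} | M a. M \<in> rev_seq_sets m s P i \<and> a \<in> M}"

definition reverse_sequential_rule :: "nat \<Rightarrow> nat \<Rightarrow> (nat \<Rightarrow> nat set \<Rightarrow> nat set \<Rightarrow> real) \<Rightarrow> nat set list \<Rightarrow> nat set set" where
  "reverse_sequential_rule m k s P = rev_seq_sets m s P (m - k)"

end

theory Submission
  imports Defs
begin

text \<open>Every round of either rule only compares scores \<open>s\<^sub>i(P,X)\<close> and \<open>s\<^sub>i(P,Y)\<close> of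
subsets \<open>X, Y\<close> of the alternatives, and \<open>s\<^sub>i(P,X) - s\<^sub>i(P,Y) = Hist(P) \<cdot> h\<close> with
\<open>h(B) = s\<^sub>i(B,X) - s\<^sub>i(B,Y)\<close>. Hence the output is determined by the signs of finitely
many linear forms in \<open>Hist(P)\<close>, one for each round \<open>i\<close> and each pair \<open>X, Y\<close>.\<close>

lemma sum_list_map_eq_sum_of_count:
  fixes f :: "'a \<Rightarrow> 'b::comm_semiring_1"
  assumes "finite X" "set xs \<subseteq> X"
  shows "sum_list (map f xs) = (\<Sum>x\<in>X. of_nat (count_list xs x) * f x)"
  using assms(2)
proof (induction xs)
  case (Cons y xs)
  have "(\<Sum>x\<in>X. of_nat (count_list (y # xs) x) * f x)
      = (\<Sum>x\<in>X. (if y = x then f x else 0)) + (\<Sum>x\<in>X. of_nat (count_list xs x) * f x)"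
    unfolding sum.distrib[symmetric] by (rule sum.cong) (simp_all add: distrib_right)
  also have "\<dots> = f y + sum_list (map f xs)"
    using Cons by (simp add: sum.delta'[OF assms(1)])
  finally show ?case by simp
qed simp

lemma pscore_eq_sum_hist:
  assumes "P \<in> profiles m"
  shows "pscore t P X = (\<Sum>B\<in>Pow (alts m). real (hist P B) * t B X)"
proof -
  have "pscore t P X = sum_list (map (\<lambda>B. t B X) P)"
    by (simp add: pscore_def sum_list_sum_nth atLeast0LessThan)
  also have "\<dots> = (\<Sum>B\<in>Pow (alts m). real (hist P B) * t B X)"
    using assms unfolding hist_def
    by (intro sum_list_map_eq_sum_of_count) (auto simp: profiles_def alts_def)
  finally show ?thesis .
qed

lemma linear_mappingI:
  fixes f :: "nat set list \<Rightarrow> 'd" and hs :: "(nat set \<Rightarrow> real) list"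
  assumes "\<And>P Q. P \<in> profiles m \<Longrightarrow> Q \<in> profiles m \<Longrightarrow>
      (\<And>h. h \<in> set hs \<Longrightarrow> sgn (\<Sum>B\<in>Pow (alts m). real (hist P B) * h B)
                          = sgn (\<Sum>B\<in>Pow (alts m). real (hist Q B) * h B)) \<Longrightarrow> f P = f Q"
  shows "linear_mapping m f"
proof -
  define sg where "sg P = map (\<lambda>h. sgn (\<Sum>B\<in>Pow (alts m). real (hist P B) * h B)) hs" for P
  define g where "g v = f (SOME P. P \<in> profiles m \<and> sg P = v)" for v
  have "f P = g (sg P)" if P: "P \<in> profiles m" for P
  proof -
    define Q where "Q = (SOME Q. Q \<in> profiles m \<and> sg Q = sg P)"
    have "\<exists>Q. Q \<in> profiles m \<and> sg Q = sg P" using P by blast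
    then have Q: "Q \<in> profiles m \<and> sg Q = sg P"
      unfolding Q_def by (rule someI_ex)
    have "f P = f Q"
    proof (rule assms[OF P conjunct1[OF Q]])
      fix h assume "h \<in> set hs"
      then show "sgn (\<Sum>B\<in>Pow (alts m). real (hist P B) * h B)
               = sgn (\<Sum>B\<in>Pow (alts m). real (hist Q B) * h B)"
        using conjunct2[OF Q] unfolding sg_def map_eq_conv by simp
    qed
    then show ?thesis unfolding g_def Q_def .
  qed
  then show ?thesis unfolding linear_mapping_def sg_def by blast
qed

definition same_score_order ::
    "nat \<Rightarrow> (nat \<Rightarrow> nat set \<Rightarrow> nat set \<Rightarrow> real) \<Rightarrow> nat set list \<Rightarrow> nat set list \<Rightarrow> bool" where
  "same_score_order m s P Q \<longleftrightarrow> (\<forall>i\<le>m. \<forall>X\<in>Pow (alts m). \<forall>Y\<in>Pow (alts m).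
      pscore (s i) P Y \<le> pscore (s i) P X \<longleftrightarrow> pscore (s i) Q Y \<le> pscore (s i) Q X)"

lemma same_score_orderD:
  assumes "same_score_order m s P Q" "i \<le> m" "X \<subseteq> alts m" "Y \<subseteq> alts m"
  shows "pscore (s i) P Y \<le> pscore (s i) P X \<longleftrightarrow> pscore (s i) Q Y \<le> pscore (s i) Q X"
  using assms unfolding same_score_order_def by blast

lemma linear_mapping_if_score_order_invariant:
  fixes f :: "nat set list \<Rightarrow> 'd"
  assumes "\<And>P Q. P \<in> profiles m \<Longrightarrow> Q \<in> profiles m \<Longrightarrow> same_score_order m s P Q \<Longrightarrow> f P = f Q"
  shows "linear_mapping m f"
proof -
  obtain triples where triples: "set triples = {..m} \<times> Pow (alts m) \<times> Pow (alts m)"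
    using finite_list[of "{..m} \<times> Pow (alts m) \<times> Pow (alts m)"] by (auto simp: alts_def)
  define hs where "hs = map (\<lambda>(i, X, Y) B. s i B X - s i B Y) triples"
  show ?thesis
  proof (rule linear_mappingI[where hs = hs])
    fix P Q
    assume P: "P \<in> profiles m" and Q: "Q \<in> profiles m"
      and sgn_eq: "\<And>h. h \<in> set hs \<Longrightarrow> sgn (\<Sum>B\<in>Pow (alts m). real (hist P B) * h B)
                                      = sgn (\<Sum>B\<in>Pow (alts m). real (hist Q B) * h B)"
    have "same_score_order m s P Q"
      unfolding same_score_order_def
    proof (intro allI impI ballI)
      fix i X Y
      assume "i \<le> m" "X \<in> Pow (alts m)" "Y \<in> Pow (alts m)"
      then have "(i, X, Y) \<in> set triples" using triples by simp
      then have "(\<lambda>B. s i B X - s i B Y) \<in> set hs"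
        unfolding hs_def set_map by (rule rev_image_eqI) simp
      have diff: "pscore (s i) R X - pscore (s i) R Y
          = (\<Sum>B\<in>Pow (alts m). real (hist R B) * (s i B X - s i B Y))" if "R \<in> profiles m" for R
        using pscore_eq_sum_hist[OF that] by (simp add: sum_subtractf[symmetric] right_diff_distrib)
      have "sgn (pscore (s i) P X - pscore (s i) P Y) = sgn (pscore (s i) Q X - pscore (s i) Q Y)"
        unfolding diff[OF P] diff[OF Q] by (rule sgn_eq) fact
      then show "pscore (s i) P Y \<le> pscore (s i) P X \<longleftrightarrow> pscore (s i) Q Y \<le> pscore (s i) Q X"
        by (simp add: sgn_if split: if_splits)
    qed
    then show "f P = f Q" using assms P Q by blast
  qed
qed

lemma argmax_sets_cong:
  assumes "\<And>X Y. X \<in> C \<Longrightarrow> Y \<in> C \<Longrightarrow> f Y \<le> f X \<longleftrightarrow> g Y \<le> g X"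
  shows "argmax_sets f C = argmax_sets g C"
  using assms unfolding argmax_sets_def by blast

lemma seq_sets_subset_Pow: "seq_sets m s P i \<subseteq> Pow (alts m)"
  by (induction i) (auto simp: argmax_sets_def)

lemma rev_seq_sets_subset_Pow: "rev_seq_sets m s P i \<subseteq> Pow (alts m)"
  by (induction i) (auto simp: argmax_sets_def)

lemma seq_sets_eq_if_same_score_order:
  assumes "same_score_order m s P Q" "i \<le> m"
  shows "seq_sets m s P i = seq_sets m s Q i"
  using assms(2)
proof (induction i)
  case (Suc i)
  let ?C = "{insert a M | M a. M \<in> seq_sets m s Q i \<and> a \<in> alts m - M}"
  have "?C \<subseteq> Pow (alts m)" using seq_sets_subset_Pow[of m s Q i] by auto
  then have "argmax_sets (pscore (s (Suc i)) P) ?C = argmax_sets (pscore (s (Suc i)) Q) ?C"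
    by (intro argmax_sets_cong same_score_orderD[OF assms(1) Suc.prems]) auto
  then show ?case using Suc by simp
qed simp

lemma rev_seq_sets_eq_if_same_score_order:
  assumes "same_score_order m s P Q" "i \<le> m"
  shows "rev_seq_sets m s P i = rev_seq_sets m s Q i"
  using assms(2)
proof (induction i)
  case (Suc i)
  let ?C = "{M - {a} | M a. M \<in> rev_seq_sets m s Q i \<and> a \<in> M}"
  have "?C \<subseteq> Pow (alts m)" using rev_seq_sets_subset_Pow[of m s Q i] by auto
  then have "argmax_sets (pscore (s (Suc i)) P) ?C = argmax_sets (pscore (s (Suc i)) Q) ?C"
    by (intro argmax_sets_cong same_score_orderD[OF assms(1) Suc.prems]) auto
  then show ?case using Suc by simp
qed simp

theorem theorem2:
  fixes m k :: nat and s :: "nat \<Rightarrow> nat set \<Rightarrow> nat set \<Rightarrow> real"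
  assumes "k \<le> m"
  shows "linear_mapping m (sequential_rule m k s) \<and> linear_mapping m (reverse_sequential_rule m k s)"
proof
  show "linear_mapping m (sequential_rule m k s)"
    using assms by (intro linear_mapping_if_score_order_invariant[of m s])
      (simp add: sequential_rule_def seq_sets_eq_if_same_score_order)
  show "linear_mapping m (reverse_sequential_rule m k s)"
    by (intro linear_mapping_if_score_order_invariant[of m s])
      (simp add: reverse_sequential_rule_def rev_seq_sets_eq_if_same_score_order)
qed

end
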